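(* There exist universal constants $c_1, c_2>0$ such that the following holds. For every real $m>1$, every integer $d\in\{2,3,\ldots\}$, every probability distribution on $\{0,1,\ldots,d\}$ with mean $m$, every $n\in\mathbb{N}\cup\{+\infty\}$ and every $x\ge 0$, the Galton–Watson process with this offspring distribution satisfies \[ \mathbb{P}(W_n\ge x)\le c_1 \exp\left\{-c_2\, \frac{m-1}{m}\, \frac{x}{d}\right\}. \]
   Context: Let $(Z_n)_{n\ge 0}$ be a Galton–Watson process with $Z_0=1$ and $Z_{n+1}=\sum_{i=1}^{Z_n}\xi_{n,i}$, where $(\xi_{n,i})_{n,i}$ are i.i.d. random variables with the given offspring distribution (the distribution of $Z_1$), whose mean is $m=\mathbb{E}[Z_1]$. Set $W_n=Z_n/m^n$ for $n\in\mathbb{N}$; $(W_n)$ is a nonnegative martingale converging almost surely (and in $L^2$) to a random variable $W_\infty\ge 0$, and $W_{+\infty}$ denotes this limit $W_\infty$. *)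

theory Defs
  imports "HOL-Probability.Probability"
begin

text \<open>Canonical probability space for a Galton-Watson process with offspring
distribution p: the sample point omega assigns to each pair (n,i) the number of
children omega (n,i) of the i-th individual of generation n; the coordinates are
i.i.d. with law p.\<close>

definition gw_space :: "nat pmf \<Rightarrow> (nat \<times> nat \<Rightarrow> nat) measure" where
  "gw_space p = PiM UNIV (\<lambda>_. measure_pmf p)"

primrec gw_Z :: "(nat \<times> nat \<Rightarrow> nat) \<Rightarrow> nat \<Rightarrow> nat" where
  "gw_Z \<omega> 0 = 1"
| "gw_Z \<omega> (Suc n) = (\<Sum>i<gw_Z \<omega> n. \<omega> (n, i))"

definition gw_mean :: "nat pmf \<Rightarrow> real" where
  "gw_mean p = measure_pmf.expectation p real"

definition gw_W :: "nat pmf \<Rightarrow> enat \<Rightarrow> (nat \<times> nat \<Rightarrow> nat) \<Rightarrow> real" where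
  "gw_W p n \<omega> = (case n of
      enat k \<Rightarrow> real (gw_Z \<omega> k) / gw_mean p ^ k
    | \<infinity> \<Rightarrow> lim (\<lambda>k. real (gw_Z \<omega> k) / gw_mean p ^ k))"

end

theory Submission
  imports Defs
begin

text \<open>
  Let \<open>G\<close> be the generating function of the offspring law, which lives on \<open>{0..d}\<close>.
  Convexity of \<open>x \<mapsto> exp (t x)\<close> on \<open>[0, d]\<close> gives \<open>G (exp t) \<le> exp (m t (1 + d t))\<close> for
  small \<open>t \<ge> 0\<close>, and the branching property gives \<open>E[s ^ Z_n] = G^n(s)\<close> (\<open>n\<close>-fold iterate).
  With \<open>\<lambda> = (m - 1) / (4 m d)\<close> and \<open>y_k = m^(k - n)\<close>, the numbers \<open>\<lambda> y_k exp (y_k / 2)\<close>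
  dominate the logarithms of the iterates \<open>G^k (exp (\<lambda> / m^n))\<close>, so \<open>E[exp (\<lambda> W_n)] \<le> e\<close>
  for every \<open>n\<close>, and Chernoff's bound gives the claim with \<open>c\<^sub>1 = e\<close>, \<open>c\<^sub>2 = 1/4\<close>.

  For \<open>n = \<infinity>\<close> the same estimate, applied to \<open>Z_(k+1) - m Z_k\<close> (a sum of \<open>Z_k\<close> independent
  centred variables bounded by \<open>d\<close>), gives \<open>E |W_(k+1) - W_k| = O(m^(-k/2))\<close>. Hence \<open>W_k\<close>
  converges almost surely, and Fatou's lemma carries the exponential moment bound to the limit.
\<close>

lemma exp_le_one_add_self_add_square:
  fixes v :: real
  assumes "\<bar>v\<bar> \<le> 1"
  shows "exp v \<le> 1 + v + v^2"
proof (cases "v \<ge> 0")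
  case True
  then show ?thesis using assms exp_bound by auto
next
  case False
  define w where "w = - v"
  have w: "0 \<le> w" "w \<le> 1" using False assms by (auto simp: w_def)
  have lower: "1 + w + w^2/2 \<le> exp w" using exp_lower_Taylor_quadratic[OF w(1)] .
  have pos: "0 < 1 + w + w^2/2" using w by (simp add: add_pos_nonneg)
  have "(1 - w + w^2) * (1 + w + w^2/2) = 1 + w^2/2 + w^3/2 + w^4/2"
    by (simp add: algebra_simps power2_eq_square power3_eq_cube power4_eq_xxxx divide_simps)
  also have "\<dots> \<ge> 1" using w by simp
  finally have "1 / (1 + w + w^2/2) \<le> 1 - w + w^2"
    using pos by (simp add: divide_le_eq mult.commute)
  moreover have "exp v = 1 / exp w" by (simp add: w_def exp_minus field_simps)
  moreover have "1 / exp w \<le> 1 / (1 + w + w^2/2)"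
    using lower pos by (intro divide_left_mono) auto
  ultimately show ?thesis by (simp add: w_def)
qed

lemma exp_half_le_two: "0 \<le> y \<Longrightarrow> y \<le> 1 \<Longrightarrow> exp (y / 2) \<le> (2::real)"
  using real_exp_bound_lemma[of "y/2"] by simp

lemma convergent_if_summable_abs_diff:
  fixes a :: "nat \<Rightarrow> real"
  assumes "summable (\<lambda>k. \<bar>a (Suc k) - a k\<bar>)"
  shows "convergent a"
proof -
  have "summable (\<lambda>k. a (Suc k) - a k)" using assms by (rule summable_rabs_cancel)
  then have "(\<lambda>n. \<Sum>k<n. a (Suc k) - a k) \<longlonglongrightarrow> (\<Sum>k. a (Suc k) - a k)"
    by (rule summable_LIMSEQ)
  then have "(\<lambda>n. (a n - a 0) + a 0) \<longlonglongrightarrow> (\<Sum>k. a (Suc k) - a k) + a 0"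
    by (intro tendsto_add) (auto simp: sum_lessThan_telescope)
  then show ?thesis by (auto simp: convergent_def)
qed

lemma (in prob_space) indep_var_nn_integral:
  fixes X Y :: "'a \<Rightarrow> ennreal"
  assumes "indep_var borel X borel Y"
  shows "(\<integral>\<^sup>+\<omega>. X \<omega> * Y \<omega> \<partial>M) = (\<integral>\<^sup>+\<omega>. X \<omega> \<partial>M) * (\<integral>\<^sup>+\<omega>. Y \<omega> \<partial>M)"
proof -
  have borel_eq: "(\<lambda> _. borel) = case_bool borel borel"
    by (rule ext) (simp split: bool.split)
  have "indep_vars (\<lambda>_. borel) (case_bool X Y) UNIV"
    using assms unfolding indep_var_def by (subst borel_eq)
  then have "(\<integral>\<^sup>+\<omega>. (\<Prod>i\<in>UNIV. case_bool X Y i \<omega>) \<partial>M) = (\<Prod>i\<in>UNIV. \<integral>\<^sup>+\<omega>. case_bool X Y i \<omega> \<partial>M)"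
    by (intro indep_vars_nn_integral) auto
  then show ?thesis by (simp add: UNIV_bool mult.commute)
qed

lemma (in prob_space) prob_ge_le_exp_moment:
  fixes X :: "'a \<Rightarrow> real"
  assumes [measurable]: "X \<in> borel_measurable M" and "0 < l" and "0 \<le> c"
    and moment: "(\<integral>\<^sup>+\<omega>. ennreal (exp (l * X \<omega>)) \<partial>M) \<le> ennreal c"
  shows "prob {\<omega> \<in> space M. x \<le> X \<omega>} \<le> c * exp (- l * x)"
proof -
  have "emeasure M {\<omega> \<in> space M. x \<le> X \<omega>}
      \<le> ennreal (exp (- l * x)) * (\<integral>\<^sup>+\<omega>. ennreal (exp (l * X \<omega>)) * indicator (space M) \<omega> \<partial>M)"
    using \<open>0 < l\<close> by (intro Chernoff_ineq_nn_integral_ge) auto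
  also have "(\<integral>\<^sup>+\<omega>. ennreal (exp (l * X \<omega>)) * indicator (space M) \<omega> \<partial>M)
      = (\<integral>\<^sup>+\<omega>. ennreal (exp (l * X \<omega>)) \<partial>M)"
    by (intro nn_integral_cong) simp
  also have "ennreal (exp (- l * x)) * \<dots> \<le> ennreal (exp (- l * x)) * ennreal c"
    using moment by (rule mult_left_mono) simp
  also have "\<dots> = ennreal (c * exp (- l * x))"
    using \<open>0 \<le> c\<close> by (simp add: ennreal_mult'' mult.commute)
  finally show ?thesis
    using \<open>0 \<le> c\<close> by (simp add: emeasure_eq_measure)
qed

lemma prob_space_gw_space: "prob_space (gw_space p)"
  unfolding gw_space_def by (rule prob_space_PiM) (rule prob_space_measure_pmf)

lemma space_gw_space [simp]: "space (gw_space p) = UNIV"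
  unfolding gw_space_def by (simp add: space_PiM)

lemma gw_Z_cong: "(\<And>j i. j < n \<Longrightarrow> \<omega> (j, i) = \<omega>' (j, i)) \<Longrightarrow> gw_Z \<omega> n = gw_Z \<omega>' n"
  by (induction n) auto

lemma measurable_count_space_iff_borel:
  "f \<in> measurable M (count_space (UNIV::'b::{countable,t2_space} set)) \<longleftrightarrow> f \<in> borel_measurable M"
  using measurable_cong_sets[OF refl sets_borel_eq_count_space, of M] by auto

lemma measurable_gw_Z_PiM:
  assumes "\<And>j i. j < n \<Longrightarrow> (j, i) \<in> I"
  shows "(\<lambda>\<omega>. gw_Z \<omega> n) \<in> measurable (PiM I (\<lambda>_. measure_pmf p)) (count_space UNIV)"
  using assms
proof (induction n)
  case 0
  then show ?case by simp
next
  case (Suc n)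
  have "(\<lambda>\<omega>. \<omega> (n, i)) \<in> measurable (PiM I (\<lambda>_. measure_pmf p)) (measure_pmf p)" for i
    using Suc.prems[of n i] by (intro measurable_component_singleton) auto
  then have "(\<lambda>\<omega>. \<Sum>i<k. \<omega> (n, i)) \<in> measurable (PiM I (\<lambda>_. measure_pmf p)) (count_space UNIV)" for k
    unfolding measurable_count_space_iff_borel
    by (intro borel_measurable_sum) (simp add: measurable_pmf_measure2 measurable_count_space_iff_borel)
  moreover have "(\<lambda>\<omega>. gw_Z \<omega> n) \<in> measurable (PiM I (\<lambda>_. measure_pmf p)) (count_space UNIV)"
    using Suc by auto
  ultimately show ?case
    by (simp only: gw_Z.simps)
       (rule measurable_compose_countable[where g="\<lambda>\<omega>. gw_Z \<omega> n" and f="\<lambda>k \<omega>. \<Sum>i<k. \<omega> (n, i)"])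
qed

lemma measurable_gw_Z [measurable]:
  "(\<lambda>\<omega>. gw_Z \<omega> n) \<in> measurable (gw_space p) (count_space UNIV)"
  unfolding gw_space_def by (rule measurable_gw_Z_PiM) auto

lemma measurable_gw_space_component:
  "(\<lambda>\<omega>. \<omega> j) \<in> measurable (gw_space p) (measure_pmf p)"
  unfolding gw_space_def by (rule measurable_component_singleton) auto

lemma measurable_gw_space_component_count_space [measurable]:
  "(\<lambda>\<omega>. \<omega> j) \<in> measurable (gw_space p) (count_space UNIV)"
  using measurable_gw_space_component by (simp add: measurable_pmf_measure2)

lemma distr_gw_space_component: "distr (gw_space p) (measure_pmf p) (\<lambda>\<omega>. \<omega> j) = measure_pmf p"
  unfolding gw_space_def by (rule distr_PiM_component) (auto intro: prob_space_measure_pmf)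

lemma indep_vars_gw_space_components:
  "prob_space.indep_vars (gw_space p) (\<lambda>_. measure_pmf p) (\<lambda>j \<omega>. \<omega> j) UNIV"
proof -
  interpret prob_space "gw_space p" by (rule prob_space_gw_space)
  have "distr (gw_space p) (measure_pmf p) (\<lambda>\<omega>. \<omega> j) = measure_pmf p" for j
    by (rule distr_gw_space_component)
  moreover have "(\<lambda>\<omega>::nat \<times> nat \<Rightarrow> nat. restrict \<omega> UNIV) = (\<lambda>\<omega>. \<omega>)"
    by (auto simp: restrict_def)
  ultimately have "distr (gw_space p) (\<Pi>\<^sub>M j\<in>UNIV. measure_pmf p) (\<lambda>\<omega>. \<lambda>j\<in>UNIV. \<omega> j)
      = (\<Pi>\<^sub>M j\<in>UNIV. distr (gw_space p) (measure_pmf p) (\<lambda>\<omega>. \<omega> j))"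
    by (simp add: gw_space_def)
  then show ?thesis
    using measurable_gw_space_component by (subst indep_vars_iff_distr_eq_PiM) auto
qed

lemma nn_integral_gw_generation_prod:
  fixes f :: "nat \<Rightarrow> ennreal"
  shows "(\<integral>\<^sup>+\<omega>. (\<Prod>i<k. f (\<omega> (n, i))) \<partial>gw_space p) = (\<integral>\<^sup>+x. f x \<partial>measure_pmf p) ^ k"
proof -
  interpret prob_space "gw_space p" by (rule prob_space_gw_space)
  have "indep_vars (\<lambda>_. borel) (\<lambda>j \<omega>. f (\<omega> j)) UNIV"
    using indep_vars_compose2[OF indep_vars_gw_space_components, of "\<lambda>_. f" "\<lambda>_. borel"]
    by (simp add: measurable_pmf_measure1)
  then have "indep_vars (\<lambda>_. borel) (\<lambda>j \<omega>. f (\<omega> j)) (Pair n ` {..<k})"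
    by (rule indep_vars_subset) auto
  then have "(\<integral>\<^sup>+\<omega>. (\<Prod>j\<in>Pair n ` {..<k}. f (\<omega> j)) \<partial>gw_space p)
      = (\<Prod>j\<in>Pair n ` {..<k}. \<integral>\<^sup>+\<omega>. f (\<omega> j) \<partial>gw_space p)"
    by (intro indep_vars_nn_integral) auto
  moreover have "(\<integral>\<^sup>+\<omega>. f (\<omega> j) \<partial>gw_space p) = (\<integral>\<^sup>+x. f x \<partial>measure_pmf p)" for j
  proof -
    have "(\<integral>\<^sup>+x. f x \<partial>measure_pmf p) = (\<integral>\<^sup>+x. f x \<partial>distr (gw_space p) (measure_pmf p) (\<lambda>\<omega>. \<omega> j))"
      by (simp add: distr_gw_space_component)
    also have "\<dots> = (\<integral>\<^sup>+\<omega>. f (\<omega> j) \<partial>gw_space p)"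
      by (rule nn_integral_distr) (simp_all add: measurable_pmf_measure1)
    finally show ?thesis by simp
  qed
  moreover have "inj_on (Pair n) {..<k}" by (auto simp: inj_on_def)
  ultimately show ?thesis by (simp add: prod.reindex card_image)
qed

lemma sets_gw_Z_eq [measurable]: "{\<omega>. gw_Z \<omega> n = k} \<in> sets (gw_space p)"
  using measurable_sets[OF measurable_gw_Z, of "{k}" n p] by (simp add: vimage_def)

text \<open>The event \<open>Z\<^sub>n = k\<close> depends only on the generations before \<open>n\<close>, hence is independent of
  the offspring numbers of generation \<open>n\<close>.\<close>

lemma nn_integral_gw_Z_eq_generation_prod:
  fixes f :: "nat \<Rightarrow> ennreal"
  shows "(\<integral>\<^sup>+\<omega>. indicator {\<omega>. gw_Z \<omega> n = k} \<omega> * (\<Prod>i<k. f (\<omega> (n, i))) \<partial>gw_space p)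
       = emeasure (gw_space p) {\<omega>. gw_Z \<omega> n = k} * (\<integral>\<^sup>+x. f x \<partial>measure_pmf p) ^ k"
proof -
  interpret prob_space "gw_space p" by (rule prob_space_gw_space)
  define A :: "(nat \<times> nat) set" where "A = {(j, i). j < n}"
  define B :: "(nat \<times> nat) set" where "B = range (Pair n)"
  define h1 where "h1 = (\<lambda>\<omega>. indicator {k} (gw_Z \<omega> n) :: ennreal)"
  define h2 where "h2 = (\<lambda>\<omega>. \<Prod>i<k. f (\<omega> (n, i)))"
  have "indep_var (PiM A (\<lambda>_. measure_pmf p)) (\<lambda>\<omega>. restrict \<omega> A)
                  (PiM B (\<lambda>_. measure_pmf p)) (\<lambda>\<omega>. restrict \<omega> B)"
    by (rule indep_var_restrict[OF indep_vars_gw_space_components]) (auto simp: A_def B_def)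
  moreover have "h1 \<in> borel_measurable (PiM A (\<lambda>_. measure_pmf p))"
    unfolding h1_def by (rule measurable_compose[OF measurable_gw_Z_PiM]) (auto simp: A_def)
  moreover have "h2 \<in> borel_measurable (PiM B (\<lambda>_. measure_pmf p))"
    unfolding h2_def
    by (intro borel_measurable_prod_ennreal measurable_compose[OF measurable_component_singleton])
       (auto simp: B_def measurable_pmf_measure1)
  ultimately have indep: "indep_var borel (\<lambda>\<omega>. h1 (restrict \<omega> A)) borel (\<lambda>\<omega>. h2 (restrict \<omega> B))"
    using indep_var_compose[of _ "\<lambda>\<omega>. restrict \<omega> A" _ "\<lambda>\<omega>. restrict \<omega> B" h1 borel h2 borel]
    by (simp add: comp_def)
  have h1_eq: "h1 (restrict \<omega> A) = indicator {\<omega>. gw_Z \<omega> n = k} \<omega>" for \<omega>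
  proof -
    have "gw_Z (restrict \<omega> A) n = gw_Z \<omega> n" by (rule gw_Z_cong) (auto simp: A_def)
    then show ?thesis by (simp add: h1_def indicator_def)
  qed
  have h2_eq: "h2 (restrict \<omega> B) = (\<Prod>i<k. f (\<omega> (n, i)))" for \<omega>
    by (simp add: h2_def B_def)
  show ?thesis
    using indep_var_nn_integral[OF indep] sets_gw_Z_eq
    by (simp add: h1_eq h2_eq nn_integral_gw_generation_prod)
qed

lemma nn_integral_gw_branching:
  fixes f g :: "nat \<Rightarrow> ennreal"
  shows "(\<integral>\<^sup>+\<omega>. g (gw_Z \<omega> n) * (\<Prod>i<gw_Z \<omega> n. f (\<omega> (n, i))) \<partial>gw_space p)
       = (\<integral>\<^sup>+\<omega>. g (gw_Z \<omega> n) * (\<integral>\<^sup>+x. f x \<partial>measure_pmf p) ^ gw_Z \<omega> n \<partial>gw_space p)"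
proof -
  let ?M = "gw_space p"
  let ?I = "\<lambda>k \<omega>. indicator {\<omega>. gw_Z \<omega> n = k} \<omega> :: ennreal"
  let ?E = "\<integral>\<^sup>+x. f x \<partial>measure_pmf p"
  have split_Z: "h (gw_Z \<omega> n) = (\<Sum>k. ?I k \<omega> * h k)" for h :: "nat \<Rightarrow> ennreal" and \<omega>
    by (subst suminf_finite[where N="{gw_Z \<omega> n}"]) (auto simp: indicator_def)
  have [measurable]: "?I k \<in> borel_measurable ?M" for k
    by measurable
  have "(\<integral>\<^sup>+\<omega>. g (gw_Z \<omega> n) * (\<Prod>i<gw_Z \<omega> n. f (\<omega> (n, i))) \<partial>?M)
      = (\<integral>\<^sup>+\<omega>. (\<Sum>k. ?I k \<omega> * (g k * (\<Prod>i<k. f (\<omega> (n, i))))) \<partial>?M)"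
    by (subst split_Z) (rule refl)
  also have "\<dots> = (\<Sum>k. \<integral>\<^sup>+\<omega>. ?I k \<omega> * (g k * (\<Prod>i<k. f (\<omega> (n, i)))) \<partial>?M)"
    by (intro nn_integral_suminf) measurable
  also have "\<dots> = (\<Sum>k. g k * (\<integral>\<^sup>+\<omega>. ?I k \<omega> * (\<Prod>i<k. f (\<omega> (n, i))) \<partial>?M))"
    by (subst nn_integral_cmult[symmetric]) (measurable, simp add: mult.left_commute)
  also have "\<dots> = (\<Sum>k. g k * (emeasure ?M {\<omega>. gw_Z \<omega> n = k} * ?E ^ k))"
    by (simp only: nn_integral_gw_Z_eq_generation_prod)
  also have "\<dots> = (\<Sum>k. \<integral>\<^sup>+\<omega>. ?I k \<omega> * (g k * ?E ^ k) \<partial>?M)"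
    by (subst nn_integral_multc) (measurable, simp add: mult_ac sets_gw_Z_eq)
  also have "\<dots> = (\<integral>\<^sup>+\<omega>. (\<Sum>k. ?I k \<omega> * (g k * ?E ^ k)) \<partial>?M)"
    by (intro nn_integral_suminf[symmetric]) measurable
  also have "\<dots> = (\<integral>\<^sup>+\<omega>. g (gw_Z \<omega> n) * ?E ^ gw_Z \<omega> n \<partial>?M)"
    by (subst split_Z) (rule refl)
  finally show ?thesis .
qed

lemma ennreal_exp_gw_Z_increment:
  "ennreal (exp (\<theta> * (real (gw_Z \<omega> (Suc k)) - c * real (gw_Z \<omega> k))))
    = ennreal (exp (- \<theta> * c)) ^ gw_Z \<omega> k * (\<Prod>i<gw_Z \<omega> k. ennreal (exp (\<theta> * real (\<omega> (k, i)))))"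
proof -
  have "exp (\<theta> * (real (gw_Z \<omega> (Suc k)) - c * real (gw_Z \<omega> k)))
      = exp (- \<theta> * c) ^ gw_Z \<omega> k * exp (\<Sum>i<gw_Z \<omega> k. \<theta> * real (\<omega> (k, i)))"
    by (simp add: exp_add[symmetric] exp_of_nat_mult[symmetric] sum_distrib_left algebra_simps)
  then show ?thesis
    by (simp add: exp_sum ennreal_mult ennreal_power prod_ennreal prod_nonneg)
qed

definition pgf :: "nat pmf \<Rightarrow> ennreal \<Rightarrow> ennreal" where
  "pgf p s = (\<integral>\<^sup>+x. s ^ x \<partial>measure_pmf p)"

lemma nn_integral_power_gw_Z: "(\<integral>\<^sup>+\<omega>. s ^ gw_Z \<omega> n \<partial>gw_space p) = (pgf p ^^ n) s"
proof (induction n arbitrary: s)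
  case 0
  interpret prob_space "gw_space p" by (rule prob_space_gw_space)
  show ?case using emeasure_space_1 by simp
next
  case (Suc n)
  have "(\<integral>\<^sup>+\<omega>. s ^ gw_Z \<omega> (Suc n) \<partial>gw_space p)
      = (\<integral>\<^sup>+\<omega>. 1 * (\<Prod>i<gw_Z \<omega> n. s ^ \<omega> (n, i)) \<partial>gw_space p)"
    by (simp add: power_sum)
  also have "\<dots> = (\<integral>\<^sup>+\<omega>. pgf p s ^ gw_Z \<omega> n \<partial>gw_space p)"
    by (subst nn_integral_gw_branching) (simp add: pgf_def)
  finally show ?case by (simp add: Suc funpow_Suc_right del: funpow.simps)
qed

lemma gw_W_enat [simp]: "gw_W p (enat k) \<omega> = real (gw_Z \<omega> k) / gw_mean p ^ k"
  by (simp add: gw_W_def)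

lemma gw_W_infinity: "gw_W p \<infinity> \<omega> = lim (\<lambda>k. gw_W p (enat k) \<omega>)"
  by (simp add: gw_W_def)

lemma borel_measurable_real_gw_Z [measurable]:
  "(\<lambda>\<omega>. real (gw_Z \<omega> k)) \<in> borel_measurable (gw_space p)"
  by (rule measurable_compose[OF measurable_gw_Z]) simp

lemma borel_measurable_gw_W_enat [measurable]: "gw_W p (enat k) \<in> borel_measurable (gw_space p)"
proof -
  have "gw_W p (enat k) = (\<lambda>\<omega>. real (gw_Z \<omega> k) / gw_mean p ^ k)"
    by (simp add: fun_eq_iff)
  then show ?thesis by simp
qed

locale bounded_supercritical_gw =
  fixes p :: "nat pmf" and d :: nat
  assumes set_pmf_subset: "set_pmf p \<subseteq> {0..d}"
    and two_le_d: "2 \<le> d"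
    and mean_gt_one: "1 < gw_mean p"
begin

abbreviation "m \<equiv> gw_mean p"
abbreviation "M \<equiv> gw_space p"
abbreviation "W k \<equiv> gw_W p (enat k)"

definition G :: "real \<Rightarrow> real" where
  "G r = (\<Sum>x\<in>{0..d}. pmf p x * r ^ x)"

lemma sum_pmf_eq_one: "(\<Sum>x\<in>{0..d}. pmf p x) = 1"
  using sum_pmf_eq_1[OF _ set_pmf_subset] by simp

lemma mean_eq_sum: "m = (\<Sum>x\<in>{0..d}. pmf p x * real x)"
  unfolding gw_mean_def
  by (subst integral_measure_pmf_real[where A="{0..d}"])
     (use set_pmf_subset in \<open>auto simp: mult.commute\<close>)

lemma mean_le_d: "m \<le> real d"
proof -
  have "m \<le> (\<Sum>x\<in>{0..d}. pmf p x * real d)"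
    unfolding mean_eq_sum by (intro sum_mono mult_left_mono) auto
  also have "\<dots> = real d"
    using sum_pmf_eq_one by (simp add: sum_distrib_right[symmetric])
  finally show ?thesis .
qed

lemma G_nonneg: "0 \<le> r \<Longrightarrow> 0 \<le> G r"
  unfolding G_def by (intro sum_nonneg) auto

lemma G_iter_nonneg: "0 \<le> r \<Longrightarrow> 0 \<le> (G ^^ n) r"
  by (induction n) (auto simp: G_nonneg)

lemma G_mono: "0 \<le> a \<Longrightarrow> a \<le> b \<Longrightarrow> G a \<le> G b"
  unfolding G_def by (intro sum_mono mult_left_mono power_mono) auto

lemma G_exp_le:
  assumes "0 \<le> t" "real d * t \<le> 1"
  shows "G (exp t) \<le> exp (m * t * (1 + real d * t))"
proof -
  have d_pos: "real d > 0" using two_le_d by simp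
  have chord: "exp t ^ x \<le> 1 + real x / real d * (exp (real d * t) - 1)" if "x \<in> {0..d}" for x
  proof -
    have "0 \<le> real x / real d" "real x / real d \<le> 1" using that d_pos by auto
    moreover have "convex_on UNIV exp" using convex_on_exp[of 1] by simp
    ultimately have "exp ((1 - real x / real d) * 0 + (real x / real d) * (real d * t))
        \<le> (1 - real x / real d) * exp 0 + (real x / real d) * exp (real d * t)"
      using convex_onD[of UNIV exp "real x / real d" 0 "real d * t"] by simp
    moreover have "(1 - real x / real d) * 0 + (real x / real d) * (real d * t) = real x * t"
      using d_pos by simp
    ultimately show ?thesis by (simp add: exp_of_nat_mult[symmetric] algebra_simps)
  qed
  have "G (exp t) \<le> (\<Sum>x\<in>{0..d}. pmf p x * (1 + real x / real d * (exp (real d * t) - 1)))"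
    unfolding G_def by (intro sum_mono mult_left_mono chord) auto
  also have "\<dots> = (\<Sum>x\<in>{0..d}. pmf p x + (pmf p x * real x) * ((exp (real d * t) - 1) / real d))"
    by (intro sum.cong refl) (simp add: algebra_simps diff_divide_distrib)
  also have "\<dots> = (\<Sum>x\<in>{0..d}. pmf p x) + (\<Sum>x\<in>{0..d}. pmf p x * real x) * ((exp (real d * t) - 1) / real d)"
    by (simp add: sum.distrib sum_distrib_right sum_divide_distrib)
  also have "\<dots> = 1 + m * ((exp (real d * t) - 1) / real d)"
    using sum_pmf_eq_one mean_eq_sum by simp
  also have "\<dots> \<le> 1 + m * ((real d * t + (real d * t)^2) / real d)"
    using exp_bound[of "real d * t"] assms mean_gt_one d_pos
    by (intro add_left_mono mult_left_mono divide_right_mono) auto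
  also have "\<dots> = 1 + m * t * (1 + real d * t)"
    using d_pos by (simp add: field_simps power2_eq_square)
  also have "\<dots> \<le> exp (m * t * (1 + real d * t))" by (rule exp_ge_add_one_self)
  finally show ?thesis .
qed

lemma centered_G_exp_le:
  assumes "\<bar>t\<bar> * real d \<le> 1"
  shows "exp (- t * m) * G (exp t) \<le> exp (t^2 * (real d)^2)"
proof -
  have deviation: "\<bar>real x - m\<bar> \<le> real d" if "x \<in> {0..d}" for x
    using that mean_le_d mean_gt_one by auto
  have pointwise: "exp (t * (real x - m)) \<le> 1 + t * (real x - m) + t^2 * (real d)^2"
    if "x \<in> {0..d}" for x
  proof -
    have "\<bar>t * (real x - m)\<bar> \<le> \<bar>t\<bar> * real d"
      unfolding abs_mult by (intro mult_left_mono deviation that) auto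
    then have small: "\<bar>t * (real x - m)\<bar> \<le> 1" using assms by simp
    have "(t * (real x - m))^2 = t^2 * \<bar>real x - m\<bar>^2" by (simp add: power_mult_distrib)
    also have "\<dots> \<le> t^2 * (real d)^2"
      by (intro mult_left_mono power_mono deviation that) auto
    finally show ?thesis using exp_le_one_add_self_add_square[OF small] by simp
  qed
  have "exp (- t * m) * G (exp t) = (\<Sum>x\<in>{0..d}. pmf p x * exp (t * (real x - m)))"
    unfolding G_def sum_distrib_left
    by (intro sum.cong refl)
       (simp add: exp_of_nat_mult[symmetric] exp_add[symmetric] algebra_simps exp_diff)
  also have "\<dots> \<le> (\<Sum>x\<in>{0..d}. pmf p x * (1 + t * (real x - m) + t^2 * (real d)^2))"
    by (intro sum_mono mult_left_mono pointwise) auto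
  also have "\<dots> = (\<Sum>x\<in>{0..d}. pmf p x) * (1 - t * m + t^2 * (real d)^2) + t * (\<Sum>x\<in>{0..d}. pmf p x * real x)"
    by (simp add: algebra_simps sum.distrib sum_distrib_right sum_distrib_left sum_subtractf)
  also have "\<dots> = 1 + t^2 * (real d)^2" using sum_pmf_eq_one mean_eq_sum by simp
  also have "\<dots> \<le> exp (t^2 * (real d)^2)" by (rule exp_ge_add_one_self)
  finally show ?thesis .
qed

definition lam :: real where
  "lam = (m - 1) / (4 * m * real d)"

lemma lam_pos: "0 < lam"
  using mean_gt_one two_le_d unfolding lam_def by (intro divide_pos_pos) auto

lemma d_lam_eq: "real d * lam = (m - 1) / (4 * m)"
  using two_le_d mean_gt_one unfolding lam_def by (simp add: field_simps)

lemma lam_le: "lam \<le> 1/8"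
proof -
  have "2 * lam \<le> real d * lam" using two_le_d lam_pos by (intro mult_right_mono) auto
  also have "\<dots> \<le> 1/4" using mean_gt_one unfolding d_lam_eq by (simp add: field_simps)
  finally show ?thesis by simp
qed

definition iter_majorant :: "real \<Rightarrow> real" where
  "iter_majorant y = lam * y * exp (y / 2)"

lemma d_iter_majorant_le:
  assumes "0 \<le> y" "y \<le> 1"
  shows "real d * iter_majorant y \<le> 1"
proof -
  have "real d * lam \<le> 1/4" using mean_gt_one unfolding d_lam_eq by (simp add: field_simps)
  then have "(real d * lam) * (y * exp (y / 2)) \<le> (1/4) * (1 * 2)"
    using assms lam_pos exp_half_le_two[OF assms] by (intro mult_mono) auto
  then show ?thesis by (simp add: iter_majorant_def mult_ac)
qed

lemma iter_majorant_step:
  assumes "0 < y" "y \<le> 1"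
  shows "m * iter_majorant y * (1 + real d * iter_majorant y) \<le> iter_majorant (m * y)"
proof -
  have "real d * lam \<le> (m - 1) / 4"
    using mean_gt_one unfolding d_lam_eq by (intro divide_left_mono) auto
  then have "real d * lam * exp (y / 2) \<le> (m - 1) / 4 * 2"
    using exp_half_le_two[of y] assms lam_pos two_le_d mean_gt_one by (intro mult_mono) auto
  then have "real d * iter_majorant y \<le> (m - 1) * y / 2"
    using assms mult_right_mono[of _ _ y] by (simp add: iter_majorant_def mult_ac)
  also have "\<dots> \<le> exp ((m - 1) * y / 2) - 1"
    using exp_ge_add_one_self[of "(m - 1) * y / 2"] by linarith
  finally have "exp (y / 2) * (1 + real d * iter_majorant y) \<le> exp (y / 2) * exp ((m - 1) * y / 2)"
    by (intro mult_left_mono) auto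
  also have "\<dots> = exp (m * y / 2)"
    by (simp add: exp_add[symmetric] algebra_simps add_divide_distrib[symmetric])
  finally have "(lam * m * y) * (exp (y / 2) * (1 + real d * iter_majorant y)) \<le> (lam * m * y) * exp (m * y / 2)"
    using lam_pos mean_gt_one assms by (intro mult_left_mono) auto
  then show ?thesis by (simp add: iter_majorant_def mult_ac)
qed

lemma G_iter_exp_le_iter_majorant:
  assumes "0 \<le> u" "u \<le> lam / m ^ n" "k \<le> n"
  shows "(G ^^ k) (exp u) \<le> exp (iter_majorant (1 / m ^ (n - k)))"
  using \<open>k \<le> n\<close>
proof (induction k)
  case 0
  have "u \<le> lam * (1 / m ^ n)" using assms by simp
  also have "\<dots> \<le> lam * (1 / m ^ n) * exp (1 / m ^ n / 2)"
    using mult_left_mono[of 1 "exp (1 / m ^ n / 2)" "lam * (1 / m ^ n)"] lam_pos mean_gt_one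
    by simp
  also have "\<dots> = iter_majorant (1 / m ^ n)" by (simp add: iter_majorant_def)
  finally show ?case by simp
next
  case (Suc k)
  define z where "z = 1 / m ^ (n - k)"
  have z: "0 < z" "z \<le> 1" using mean_gt_one by (auto simp: z_def)
  have mz: "1 / m ^ (n - Suc k) = m * z"
    using Suc.prems mean_gt_one by (simp add: z_def Suc_diff_Suc[symmetric] field_simps)
  have "(G ^^ Suc k) (exp u) = G ((G ^^ k) (exp u))" by simp
  also have "\<dots> \<le> G (exp (iter_majorant z))"
    using Suc G_iter_nonneg[of "exp u" k] by (intro G_mono) (auto simp: z_def)
  also have "\<dots> \<le> exp (m * iter_majorant z * (1 + real d * iter_majorant z))"
    using z lam_pos by (intro G_exp_le d_iter_majorant_le) (auto simp: iter_majorant_def)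
  also have "\<dots> \<le> exp (iter_majorant (1 / m ^ (n - Suc k)))"
    unfolding mz using iter_majorant_step[OF z] by simp
  finally show ?case .
qed

lemma G_iter_exp_le:
  assumes "0 \<le> u" "u \<le> lam / m ^ n"
  shows "(G ^^ n) (exp u) \<le> exp 1"
proof -
  have "iter_majorant 1 \<le> (1/8) * 2"
    unfolding iter_majorant_def using lam_le lam_pos exp_half_le_two[of 1] by (intro mult_mono) auto
  then have "exp (iter_majorant 1) \<le> exp 1" by simp
  then show ?thesis using G_iter_exp_le_iter_majorant[OF assms, of n] by (simp del: exp_le_cancel_iff)
qed

lemma pgf_ennreal: "0 \<le> r \<Longrightarrow> pgf p (ennreal r) = ennreal (G r)"
proof -
  assume "0 \<le> r"
  have "pgf p (ennreal r) = (\<Sum>x\<in>{0..d}. ennreal r ^ x * ennreal (pmf p x))"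
    unfolding pgf_def by (rule nn_integral_measure_pmf_support) (use set_pmf_subset in auto)
  also have "\<dots> = ennreal (G r)"
    unfolding G_def using \<open>0 \<le> r\<close>
    by (subst sum_ennreal[symmetric]) (auto simp: ennreal_power ennreal_mult'' mult.commute)
  finally show ?thesis .
qed

lemma pgf_iter_ennreal: "0 \<le> r \<Longrightarrow> (pgf p ^^ n) (ennreal r) = ennreal ((G ^^ n) r)"
  by (induction n) (auto simp: pgf_ennreal G_iter_nonneg)

lemma nn_integral_exp_lam_W: "(\<integral>\<^sup>+\<omega>. ennreal (exp (lam * W k \<omega>)) \<partial>M) \<le> ennreal (exp 1)"
proof -
  have "(\<integral>\<^sup>+\<omega>. ennreal (exp (lam * W k \<omega>)) \<partial>M) = (\<integral>\<^sup>+\<omega>. ennreal (exp (lam / m ^ k)) ^ gw_Z \<omega> k \<partial>M)"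
    by (intro nn_integral_cong) (simp add: ennreal_power exp_of_nat_mult[symmetric] mult.commute)
  also have "\<dots> = ennreal ((G ^^ k) (exp (lam / m ^ k)))"
    by (simp add: nn_integral_power_gw_Z pgf_iter_ennreal)
  also have "\<dots> \<le> ennreal (exp 1)"
    using G_iter_exp_le[of "lam / m ^ k" k] lam_pos mean_gt_one by simp
  finally show ?thesis .
qed

lemma nn_integral_exp_centered_increment:
  assumes "\<bar>\<theta>\<bar> * real d \<le> 1" "\<theta>^2 * (real d)^2 \<le> lam / m ^ k"
  shows "(\<integral>\<^sup>+\<omega>. ennreal (exp (\<theta> * (real (gw_Z \<omega> (Suc k)) - m * real (gw_Z \<omega> k)))) \<partial>M)
    \<le> ennreal (exp 1)"
proof -
  have offspring: "(\<integral>\<^sup>+x. ennreal (exp (\<theta> * real x)) \<partial>measure_pmf p) = ennreal (G (exp \<theta>))"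
  proof -
    have "(\<integral>\<^sup>+x. ennreal (exp (\<theta> * real x)) \<partial>measure_pmf p) = pgf p (ennreal (exp \<theta>))"
      unfolding pgf_def
      by (intro nn_integral_cong) (simp add: ennreal_power exp_of_nat_mult[symmetric] mult.commute)
    then show ?thesis by (simp add: pgf_ennreal)
  qed
  have "(\<integral>\<^sup>+\<omega>. ennreal (exp (\<theta> * (real (gw_Z \<omega> (Suc k)) - m * real (gw_Z \<omega> k)))) \<partial>M)
      = (\<integral>\<^sup>+\<omega>. ennreal (exp (- \<theta> * m)) ^ gw_Z \<omega> k * (\<integral>\<^sup>+x. ennreal (exp (\<theta> * real x)) \<partial>measure_pmf p) ^ gw_Z \<omega> k \<partial>M)"
    unfolding ennreal_exp_gw_Z_increment by (rule nn_integral_gw_branching)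
  also have "\<dots> = (\<integral>\<^sup>+\<omega>. ennreal (exp (- \<theta> * m) * G (exp \<theta>)) ^ gw_Z \<omega> k \<partial>M)"
    unfolding offspring
    by (intro nn_integral_cong) (simp add: ennreal_mult G_nonneg power_mult_distrib)
  also have "\<dots> \<le> (\<integral>\<^sup>+\<omega>. ennreal (exp (lam / m ^ k)) ^ gw_Z \<omega> k \<partial>M)"
  proof (intro nn_integral_mono power_mono ennreal_leI)
    have "exp (- \<theta> * m) * G (exp \<theta>) \<le> exp (\<theta>^2 * (real d)^2)"
      using assms(1) by (rule centered_G_exp_le)
    also have "\<dots> \<le> exp (lam / m ^ k)" using assms(2) by simp
    finally show "exp (- \<theta> * m) * G (exp \<theta>) \<le> exp (lam / m ^ k)" .
  qed simp
  also have "\<dots> = ennreal ((G ^^ k) (exp (lam / m ^ k)))"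
    by (simp add: nn_integral_power_gw_Z pgf_iter_ennreal)
  also have "\<dots> \<le> ennreal (exp 1)"
    using G_iter_exp_le[of "lam / m ^ k" k] lam_pos mean_gt_one by simp
  finally show ?thesis .
qed

lemma nn_integral_abs_centered_increment:
  assumes "0 < \<theta>" "\<theta> * real d \<le> 1" "\<theta>^2 * (real d)^2 \<le> lam / m ^ k"
  shows "(\<integral>\<^sup>+\<omega>. ennreal \<bar>real (gw_Z \<omega> (Suc k)) - m * real (gw_Z \<omega> k)\<bar> \<partial>M)
    \<le> ennreal (2 * exp 1 / \<theta>)"
proof -
  define D where "D \<omega> = real (gw_Z \<omega> (Suc k)) - m * real (gw_Z \<omega> k)" for \<omega>
  have [measurable]: "D \<in> borel_measurable M" unfolding D_def by measurable
  have "\<bar>D \<omega>\<bar> \<le> (exp (\<theta> * D \<omega>) + exp (- \<theta> * D \<omega>)) * (1 / \<theta>)" for \<omega>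
  proof -
    have "\<theta> * \<bar>D \<omega>\<bar> \<le> exp (\<theta> * \<bar>D \<omega>\<bar>)"
      using exp_ge_add_one_self[of "\<theta> * \<bar>D \<omega>\<bar>"] by linarith
    also have "\<dots> \<le> exp (\<theta> * D \<omega>) + exp (- \<theta> * D \<omega>)"
      by (cases "D \<omega> \<ge> 0") (auto simp: abs_if add_increasing add_increasing2)
    finally show ?thesis using assms(1) by (simp add: field_simps)
  qed
  then have "(\<integral>\<^sup>+\<omega>. ennreal \<bar>D \<omega>\<bar> \<partial>M)
      \<le> (\<integral>\<^sup>+\<omega>. (ennreal (exp (\<theta> * D \<omega>)) + ennreal (exp (- \<theta> * D \<omega>))) * ennreal (1 / \<theta>) \<partial>M)"
    using assms(1)
    by (intro nn_integral_mono) (simp add: ennreal_plus[symmetric] ennreal_mult''[symmetric] del: ennreal_plus)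
  also have "\<dots> = ((\<integral>\<^sup>+\<omega>. ennreal (exp (\<theta> * D \<omega>)) \<partial>M) + (\<integral>\<^sup>+\<omega>. ennreal (exp (- \<theta> * D \<omega>)) \<partial>M))
      * ennreal (1 / \<theta>)"
    by (subst nn_integral_multc) (auto simp: nn_integral_add)
  also have "\<dots> \<le> (ennreal (exp 1) + ennreal (exp 1)) * ennreal (1 / \<theta>)"
    unfolding D_def using assms nn_integral_exp_centered_increment[of "- \<theta>" k]
    by (intro mult_right_mono add_mono nn_integral_exp_centered_increment) auto
  also have "\<dots> = ennreal (2 * exp 1 / \<theta>)"
    using assms(1) by (simp add: ennreal_plus[symmetric] ennreal_mult''[symmetric] del: ennreal_plus)
  finally show ?thesis by (simp add: D_def)
qed

lemma nn_integral_abs_centered_increment_le: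
  "(\<integral>\<^sup>+\<omega>. ennreal \<bar>real (gw_Z \<omega> (Suc k)) - m * real (gw_Z \<omega> k)\<bar> \<partial>M)
    \<le> ennreal (2 * exp 1 * real d * sqrt m ^ k / sqrt lam)"
proof -
  have d_pos: "0 < real d" using two_le_d by simp
  have sqrt_m: "1 \<le> sqrt m ^ k" using mean_gt_one by (simp add: one_le_power)
  define \<theta> where "\<theta> = sqrt lam / (real d * sqrt m ^ k)"
  have "0 < \<theta>" unfolding \<theta>_def using lam_pos d_pos mean_gt_one by simp
  moreover have "\<theta> * real d \<le> 1"
  proof -
    have "\<theta> * real d = sqrt lam / sqrt m ^ k" unfolding \<theta>_def using d_pos by simp
    also have "\<dots> \<le> sqrt lam" using sqrt_m lam_pos by (simp add: divide_le_eq mult_le_cancel_left1)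
    also have "\<dots> \<le> 1" using lam_le by simp
    finally show ?thesis .
  qed
  moreover have "\<theta>^2 * (real d)^2 = lam / m ^ k"
  proof -
    have "m ^ k = sqrt m ^ k * sqrt m ^ k"
      using mean_gt_one by (simp add: power_mult_distrib[symmetric])
    then show ?thesis
      unfolding \<theta>_def using d_pos lam_pos by (simp add: power_divide power_mult_distrib power2_eq_square)
  qed
  ultimately have "(\<integral>\<^sup>+\<omega>. ennreal \<bar>real (gw_Z \<omega> (Suc k)) - m * real (gw_Z \<omega> k)\<bar> \<partial>M)
      \<le> ennreal (2 * exp 1 / \<theta>)"
    by (intro nn_integral_abs_centered_increment) auto
  also have "2 * exp 1 / \<theta> = 2 * exp 1 * real d * sqrt m ^ k / sqrt lam"
    unfolding \<theta>_def by simp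
  finally show ?thesis .
qed

lemma nn_integral_abs_W_increment:
  "(\<integral>\<^sup>+\<omega>. ennreal \<bar>W (Suc k) \<omega> - W k \<omega>\<bar> \<partial>M)
    \<le> ennreal (2 * exp 1 * real d / (sqrt lam * m) * (1 / sqrt m) ^ k)"
proof -
  have m_pos: "0 < m" using mean_gt_one by simp
  have "(\<integral>\<^sup>+\<omega>. ennreal \<bar>W (Suc k) \<omega> - W k \<omega>\<bar> \<partial>M)
     = (\<integral>\<^sup>+\<omega>. ennreal \<bar>real (gw_Z \<omega> (Suc k)) - m * real (gw_Z \<omega> k)\<bar> * ennreal (1 / m ^ Suc k) \<partial>M)"
    using m_pos by (intro nn_integral_cong)
      (simp add: ennreal_mult''[symmetric] abs_mult[symmetric] field_simps del: ennreal_mult'')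
  also have "\<dots> = (\<integral>\<^sup>+\<omega>. ennreal \<bar>real (gw_Z \<omega> (Suc k)) - m * real (gw_Z \<omega> k)\<bar> \<partial>M)
      * ennreal (1 / m ^ Suc k)"
    by (intro nn_integral_multc) measurable
  also have "\<dots> \<le> ennreal (2 * exp 1 * real d * sqrt m ^ k / sqrt lam) * ennreal (1 / m ^ Suc k)"
    by (intro mult_right_mono nn_integral_abs_centered_increment_le) simp
  also have "\<dots> = ennreal (2 * exp 1 * real d * sqrt m ^ k / sqrt lam * (1 / m ^ Suc k))"
    by (rule ennreal_mult''[symmetric]) (use m_pos in simp)
  also have "2 * exp 1 * real d * sqrt m ^ k / sqrt lam * (1 / m ^ Suc k)
      = 2 * exp 1 * real d / (sqrt lam * m) * (1 / sqrt m) ^ k"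
  proof -
    have "m ^ Suc k = m * (sqrt m ^ k * sqrt m ^ k)"
      using m_pos by (simp add: power_mult_distrib[symmetric])
    then show ?thesis using m_pos lam_pos by (simp add: field_simps power_one_over)
  qed
  finally show ?thesis .
qed

lemma AE_convergent_W: "AE \<omega> in M. convergent (\<lambda>k. W k \<omega>)"
proof -
  define C where "C = 2 * exp 1 * real d / (sqrt lam * m)"
  let ?S = "\<lambda>\<omega>. \<Sum>k. ennreal \<bar>W (Suc k) \<omega> - W k \<omega>\<bar>"
  have "(\<integral>\<^sup>+\<omega>. ?S \<omega> \<partial>M) = (\<Sum>k. \<integral>\<^sup>+\<omega>. ennreal \<bar>W (Suc k) \<omega> - W k \<omega>\<bar> \<partial>M)"
    by (intro nn_integral_suminf) measurable
  also have "\<dots> \<le> (\<Sum>k. ennreal (C * (1 / sqrt m) ^ k))"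
    unfolding C_def by (intro suminf_le nn_integral_abs_W_increment) auto
  also have "\<dots> = ennreal (\<Sum>k. C * (1 / sqrt m) ^ k)"
  proof (rule suminf_ennreal2)
    show "0 \<le> C * (1 / sqrt m) ^ k" for k
      unfolding C_def using mean_gt_one lam_pos by simp
    show "summable (\<lambda>k. C * (1 / sqrt m) ^ k)"
      using mean_gt_one by (intro summable_mult summable_geometric) auto
  qed
  finally have "(\<integral>\<^sup>+\<omega>. ?S \<omega> \<partial>M) \<noteq> \<infinity>"
    by (auto simp: top_unique)
  then have "AE \<omega> in M. ?S \<omega> \<noteq> \<infinity>"
    by (intro nn_integral_noteq_infinite) measurable
  then show ?thesis
  proof (rule AE_mp, intro AE_I2 impI)
    fix \<omega> assume "?S \<omega> \<noteq> \<infinity>"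
    then have "summable (\<lambda>k. \<bar>W (Suc k) \<omega> - W k \<omega>\<bar>)"
      by (intro summable_suminf_not_top) auto
    then show "convergent (\<lambda>k. W k \<omega>)"
      by (rule convergent_if_summable_abs_diff)
  qed
qed

lemma nn_integral_exp_lam_W_infinity:
  "(\<integral>\<^sup>+\<omega>. ennreal (exp (lam * gw_W p \<infinity> \<omega>)) \<partial>M) \<le> ennreal (exp 1)"
proof -
  have "AE \<omega> in M. ennreal (exp (lam * gw_W p \<infinity> \<omega>)) = liminf (\<lambda>k. ennreal (exp (lam * W k \<omega>)))"
  proof (rule AE_mp[OF AE_convergent_W], intro AE_I2 impI)
    fix \<omega> assume "convergent (\<lambda>k. W k \<omega>)"
    then have "(\<lambda>k. W k \<omega>) \<longlonglongrightarrow> gw_W p \<infinity> \<omega>"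
      by (simp add: gw_W_infinity convergent_LIMSEQ_iff del: gw_W_enat)
    then have "(\<lambda>k. ennreal (exp (lam * W k \<omega>))) \<longlonglongrightarrow> ennreal (exp (lam * gw_W p \<infinity> \<omega>))"
      by (intro tendsto_ennrealI tendsto_exp tendsto_mult_left)
    then show "ennreal (exp (lam * gw_W p \<infinity> \<omega>)) = liminf (\<lambda>k. ennreal (exp (lam * W k \<omega>)))"
      by (intro lim_imp_Liminf[symmetric]) auto
  qed
  then have "(\<integral>\<^sup>+\<omega>. ennreal (exp (lam * gw_W p \<infinity> \<omega>)) \<partial>M)
      = (\<integral>\<^sup>+\<omega>. liminf (\<lambda>k. ennreal (exp (lam * W k \<omega>))) \<partial>M)"
    by (rule nn_integral_cong_AE)
  also have "\<dots> \<le> liminf (\<lambda>k. \<integral>\<^sup>+\<omega>. ennreal (exp (lam * W k \<omega>)) \<partial>M)"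
    by (intro nn_integral_liminf) measurable
  also have "\<dots> \<le> liminf (\<lambda>k. ennreal (exp 1))"
    by (intro Liminf_mono always_eventually allI nn_integral_exp_lam_W)
  finally show ?thesis by (simp add: Liminf_const)
qed

lemma borel_measurable_gw_W_infinity: "gw_W p \<infinity> \<in> borel_measurable M"
  unfolding gw_W_infinity[abs_def] by (intro borel_measurable_lim_metric) measurable

lemma prob_gw_W_ge:
  "measure M {\<omega> \<in> space M. gw_W p n \<omega> \<ge> x} \<le> exp 1 * exp (- (1/4) * ((m - 1) / m) * (x / real d))"
proof -
  have "measure M {\<omega> \<in> space M. x \<le> gw_W p n \<omega>} \<le> exp 1 * exp (- lam * x)"
  proof (cases n)
    case (enat k)
    show ?thesis unfolding enat
      by (rule prob_space.prob_ge_le_exp_moment[OF prob_space_gw_space])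
         (use lam_pos nn_integral_exp_lam_W in auto)
  next
    case infinity
    show ?thesis unfolding infinity
      by (rule prob_space.prob_ge_le_exp_moment[OF prob_space_gw_space borel_measurable_gw_W_infinity])
         (use lam_pos nn_integral_exp_lam_W_infinity in auto)
  qed
  moreover have "- lam * x = - (1/4) * ((m - 1) / m) * (x / real d)"
    unfolding lam_def using mean_gt_one two_le_d by (simp add: field_simps)
  ultimately show ?thesis by simp
qed

end

theorem theorem1:
  shows "\<exists>c1 c2 :: real. c1 > 0 \<and> c2 > 0 \<and>
    (\<forall>(m::real) (d::nat) (p::nat pmf). m > 1 \<longrightarrow> d \<ge> 2 \<longrightarrow>
       set_pmf p \<subseteq> {0..d} \<longrightarrow> gw_mean p = m \<longrightarrow>
       (\<forall>(n::enat) (x::real). x \<ge> 0 \<longrightarrow>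
          measure (gw_space p) {\<omega> \<in> space (gw_space p). gw_W p n \<omega> \<ge> x}
            \<le> c1 * exp (- c2 * ((m - 1) / m) * (x / real d))))"
proof (rule exI[of _ "exp 1"], rule exI[of _ "1/4"], intro conjI allI impI)
  fix m :: real and d :: nat and p :: "nat pmf" and n :: enat and x :: real
  assume "m > 1" "d \<ge> 2" "set_pmf p \<subseteq> {0..d}" "gw_mean p = m" "x \<ge> 0"
  then interpret bounded_supercritical_gw p d
    by unfold_locales auto
  show "measure (gw_space p) {\<omega> \<in> space (gw_space p). gw_W p n \<omega> \<ge> x}
      \<le> exp 1 * exp (- (1/4) * ((m - 1) / m) * (x / real d))"
    using prob_gw_W_ge \<open>gw_mean p = m\<close> by simp
qed simp_all

end
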